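(* Let $m\ge 1$, $P,Q\ge 0$ be integers with $N=P+Q\ge1$, let $D$, $F_1,\ldots,F_m$, $\mathcal{E}$, $d$ and $G_F:\mathcal{E}\to\mathcal{E}$ be as described in the context, and assume that the state network of $G_F$ is strongly connected. Then $G_F$ is topologically transitive on $(\mathcal{E},d)$: for any nonempty open sets $U',U''\subseteq\mathcal{E}$ there exists $n_0>0$ with $G_F^{n_0}(U')\cap U''\neq\varnothing$.
   Context: Let $D=\{k\,2^{-Q}: k=0,1,\ldots,2^N-1\}$ be the set of $N$-bit fixed-point numbers; each $x\in D$ is written in binary as $x=x_{P-1}x_{P-2}\ldots x_0.x_{-1}\ldots x_{-Q}$ with digits $x_j\in\{0,1\}$. For $x,y\in D$ let $x\cdot y$, $x+y$ and $\overline{x}$ denote bitwise AND, bitwise OR and bitwise NOT (complement of every one of the $N$ digits), which are again elements of $D$. Let $F_1,\ldots,F_m:D^m\to D$ be arbitrary functions. Let $\Sigma$ be the set of one-sided infinite sequences $w=w^1w^2\ldots$ with $w^k\in D$, and $\sigma:\Sigma\to\Sigma$ the left shift $\sigma(w)=w^2w^3\ldots$. Let $\mathcal{E}=\Sigma^m\times D^m$, with elements $E=((w_1,\ldots,w_m),(x_1,\ldots,x_m))$. Define $G_F:\mathcal{E}\to\mathcal{E}$ by $G_F((w_1,\ldots,w_m),x)=((\sigma(w_1),\ldots,\sigma(w_m)),(H_1,\ldots,H_m))$, where $x=(x_1,\ldots,x_m)$ and $H_i=(x_i\cdot\overline{w_i^1})+(F_i(x)\cdot w_i^1)$ (i.e.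 bit $j$ of $x_i$ is replaced by bit $j$ of $F_i(x)$ exactly when bit $j$ of $w_i^1$ is $1$). The metric on $\mathcal{E}$ is $d(E,\hat E)=\sum_{i=1}^m\sum_{k=1}^\infty \frac{|w_i^k-\hat w_i^k|}{2^{Nk}}+\sqrt{\sum_{i=1}^m (x_i-\hat x_i)^2}$. The state network of $G_F$ is the directed graph whose vertex set is $D^m$, with an edge from $\hat x$ to $\tilde x$ whenever there is some $(w_1,\ldots,w_m)\in\Sigma^m$ such that the $D^m$-component of $G_F((w_1,\ldots,w_m),\hat x)$ equals $\tilde x$. It is strongly connected if every vertex is reachable from every other vertex by a directed path. *)

theory Defs
  imports "HOL-Analysis.Analysis"
begin

definition fxD :: "nat \<Rightarrow> nat \<Rightarrow> real set" where
  "fxD N Q = {real k / 2 ^ Q | k. k < 2 ^ N}"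

text \<open>The integer k with x = k 2^-Q (the binary digits of k are the digits of x).\<close>
definition fxcode :: "nat \<Rightarrow> real \<Rightarrow> nat" where
  "fxcode Q x = nat \<lfloor>x * 2 ^ Q\<rfloor>"

definition fxval :: "nat \<Rightarrow> nat \<Rightarrow> real" where
  "fxval Q k = real k / 2 ^ Q"

definition fxand :: "nat \<Rightarrow> real \<Rightarrow> real \<Rightarrow> real" where
  "fxand Q x y = fxval Q (and (fxcode Q x) (fxcode Q y))"

definition fxor :: "nat \<Rightarrow> real \<Rightarrow> real \<Rightarrow> real" where
  "fxor Q x y = fxval Q (or (fxcode Q x) (fxcode Q y))"

definition fxnot :: "nat \<Rightarrow> nat \<Rightarrow> real \<Rightarrow> real" where
  "fxnot N Q x = fxval Q (2 ^ N - 1 - fxcode Q x)"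

text \<open>Points of the phase space: (W, X) with W a list of m sequences
  (sequence index 0 corresponds to w^1) and X a list of m elements of D.\<close>
definition phase_space :: "nat \<Rightarrow> nat \<Rightarrow> nat \<Rightarrow> ((nat \<Rightarrow> real) list \<times> real list) set" where
  "phase_space m N Q = {(W, X). length W = m \<and> length X = m \<and>
      (\<forall>i<m. \<forall>k. (W ! i) k \<in> fxD N Q) \<and> (\<forall>i<m. X ! i \<in> fxD N Q)}"

definition state_space :: "nat \<Rightarrow> nat \<Rightarrow> nat \<Rightarrow> real list set" where
  "state_space m N Q = {X. length X = m \<and> (\<forall>i<m. X ! i \<in> fxD N Q)}"

text \<open>The metric d; the k-th term (k \<ge> 1) has weight 2^(-N k); index k here is k+1 there.\<close>
definition dist_E :: "nat \<Rightarrow> nat \<Rightarrow> ((nat \<Rightarrow> real) list \<times> real list) \<Rightarrow>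
    ((nat \<Rightarrow> real) list \<times> real list) \<Rightarrow> real" where
  "dist_E m N E E' =
     (\<Sum>i<m. (\<Sum>k. \<bar>(fst E ! i) k - (fst E' ! i) k\<bar> / 2 ^ (N * (k + 1))))
     + sqrt (\<Sum>i<m. (snd E ! i - snd E' ! i)\<^sup>2)"

definition metric_open :: "'a set \<Rightarrow> ('a \<Rightarrow> 'a \<Rightarrow> real) \<Rightarrow> 'a set \<Rightarrow> bool" where
  "metric_open S d U \<longleftrightarrow> U \<subseteq> S \<and>
     (\<forall>x\<in>U. \<exists>e>0. \<forall>y\<in>S. d x y < e \<longrightarrow> y \<in> U)"

definition G_F :: "nat \<Rightarrow> nat \<Rightarrow> nat \<Rightarrow> (nat \<Rightarrow> real list \<Rightarrow> real) \<Rightarrow>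
    ((nat \<Rightarrow> real) list \<times> real list) \<Rightarrow> ((nat \<Rightarrow> real) list \<times> real list)" where
  "G_F m N Q F E =
     (map (\<lambda>w k. w (Suc k)) (fst E),
      map (\<lambda>i. fxor Q (fxand Q (snd E ! i) (fxnot N Q ((fst E ! i) 0)))
                       (fxand Q (F i (snd E)) ((fst E ! i) 0))) [0..<m])"

definition state_edges :: "nat \<Rightarrow> nat \<Rightarrow> nat \<Rightarrow> (nat \<Rightarrow> real list \<Rightarrow> real) \<Rightarrow> (real list \<times> real list) set" where
  "state_edges m N Q F = {(x, y). x \<in> state_space m N Q \<and> y \<in> state_space m N Q \<and>
     (\<exists>W. length W = m \<and> (\<forall>i<m. \<forall>k. (W ! i) k \<in> fxD N Q) \<and> snd (G_F m N Q F (W, x)) = y)}"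

definition strongly_connected_net :: "nat \<Rightarrow> nat \<Rightarrow> nat \<Rightarrow> (nat \<Rightarrow> real list \<Rightarrow> real) \<Rightarrow> bool" where
  "strongly_connected_net m N Q F \<longleftrightarrow>
     (\<forall>x\<in>state_space m N Q. \<forall>y\<in>state_space m N Q. (x, y) \<in> (state_edges m N Q F)\<^sup>*)"

end

theory Submission
  imports Defs
begin

text \<open>Every ball around \<open>(W, X)\<close> contains all points with state \<open>X\<close> whose strategy
  sequences agree with \<open>W\<close> on the first \<open>k\<close> entries, for \<open>k\<close> large: the remaining terms of
  \<open>d\<close> are dominated by a geometric tail. Given a target \<open>(W', X')\<close>, run \<open>(W, X)\<close> for \<open>k\<close> steps
  to some state \<open>x\<close>; strong connectivity provides strategies driving \<open>x\<close> to \<open>X'\<close> and then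
  continuing with \<open>W'\<close>. Prefixing them with the first \<open>k\<close> entries of \<open>W\<close> gives a point of the
  ball that is mapped onto \<open>(W', X')\<close>.\<close>

lemma mem_fxD_iff: "x \<in> fxD N Q \<longleftrightarrow> (\<exists>k<2^N. x = fxval Q k)"
  by (auto simp: fxD_def fxval_def)

lemma fxcode_less: "x \<in> fxD N Q \<Longrightarrow> fxcode Q x < 2^N"
  by (auto simp: mem_fxD_iff fxcode_def fxval_def)

lemma fxand_mem_fxD: "x \<in> fxD N Q \<Longrightarrow> fxand Q x y \<in> fxD N Q"
proof -
  assume "x \<in> fxD N Q"
  then have "take_bit N (fxcode Q x) = fxcode Q x"
    by (simp add: fxcode_less take_bit_nat_eq_self_iff)
  then have "and (fxcode Q x) (fxcode Q y) < 2^N"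
    by (metis and.assoc and.commute take_bit_eq_mask take_bit_nat_eq_self_iff)
  then show ?thesis
    unfolding fxand_def mem_fxD_iff by blast
qed

lemma fxor_mem_fxD: "x \<in> fxD N Q \<Longrightarrow> y \<in> fxD N Q \<Longrightarrow> fxor Q x y \<in> fxD N Q"
proof -
  assume "x \<in> fxD N Q" "y \<in> fxD N Q"
  then have "or (fxcode Q x) (fxcode Q y) < 2^N"
    by (metis fxcode_less take_bit_nat_eq_self_iff take_bit_or)
  then show ?thesis
    unfolding fxor_def mem_fxD_iff by blast
qed

lemma fxD_subset_atLeastAtMost: "fxD N Q \<subseteq> {0..2^N}"
proof
  fix x assume "x \<in> fxD N Q"
  then obtain k :: nat where "k < 2^N" and x: "x = real k / 2^Q"
    by (auto simp: fxD_def)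
  then have "real k \<le> 2^N"
    by (metis less_imp_le of_nat_less_numeral_power_cancel_iff)
  moreover have "real k / 2^Q \<le> real k"
    by (simp add: divide_le_eq mult_le_cancel_left1)
  ultimately have "x \<le> 2^N"
    using x by linarith
  then show "x \<in> {0..2^N}"
    using x by simp
qed

definition strategies :: "nat \<Rightarrow> nat \<Rightarrow> nat \<Rightarrow> (nat \<Rightarrow> real) list set" where
  "strategies m N Q = {W. length W = m \<and> (\<forall>i<m. \<forall>k. (W ! i) k \<in> fxD N Q)}"

lemma phase_space_eq: "phase_space m N Q = strategies m N Q \<times> state_space m N Q"
  by (auto simp: phase_space_def strategies_def state_space_def)

lemma state_edges_iff:
  "(x, y) \<in> state_edges m N Q F \<longleftrightarrow> x \<in> state_space m N Q \<and> y \<in> state_space m N Q \<and>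
     (\<exists>W\<in>strategies m N Q. snd (G_F m N Q F (W, x)) = y)"
  by (auto simp: state_edges_def strategies_def)

lemma G_F_in_phase_space:
  assumes "E \<in> phase_space m N Q" and "\<forall>i<m. \<forall>x\<in>state_space m N Q. F i x \<in> fxD N Q"
  shows "G_F m N Q F E \<in> phase_space m N Q"
proof -
  obtain W X where E: "E = (W, X)" and W: "W \<in> strategies m N Q" and X: "X \<in> state_space m N Q"
    using assms(1) by (auto simp: phase_space_eq)
  have "fst (G_F m N Q F E) \<in> strategies m N Q"
    using W by (simp add: E G_F_def strategies_def)
  moreover have "snd (G_F m N Q F E) \<in> state_space m N Q"
    using X assms(2) by (simp add: E G_F_def state_space_def fxor_mem_fxD fxand_mem_fxD)
  ultimately show ?thesis
    by (simp add: phase_space_eq mem_Times_iff)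
qed

lemma funpow_G_F_in_phase_space:
  assumes "E \<in> phase_space m N Q" and "\<forall>i<m. \<forall>x\<in>state_space m N Q. F i x \<in> fxD N Q"
  shows "(G_F m N Q F ^^ n) E \<in> phase_space m N Q"
  by (induction n) (simp_all add: assms G_F_in_phase_space)

lemma fst_funpow_G_F: "fst ((G_F m N Q F ^^ n) E) = map (\<lambda>w k. w (k + n)) (fst E)"
  by (induction n) (auto simp: G_F_def o_def)

lemma snd_funpow_G_F_cong:
  assumes "length W = m" "length W' = m" "\<forall>i<m. \<forall>k<n. (W ! i) k = (W' ! i) k"
  shows "snd ((G_F m N Q F ^^ n) (W, X)) = snd ((G_F m N Q F ^^ n) (W', X))"
  using assms
proof (induction n arbitrary: W W' X)
  case 0
  then show ?case by simp
next
  case (Suc n)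
  let ?G = "G_F m N Q F" and ?shift = "map (\<lambda>w k. w (Suc k))"
  have "?G (W', X) = (?shift W', snd (?G (W, X)))"
    using Suc.prems by (simp add: G_F_def)
  moreover have "snd ((?G ^^ n) (?shift W, snd (?G (W, X)))) =
                 snd ((?G ^^ n) (?shift W', snd (?G (W, X))))"
    using Suc.prems by (intro Suc.IH) auto
  moreover have "?G (W, X) = (?shift W, snd (?G (W, X)))"
    by (simp add: G_F_def)
  ultimately show ?case
    unfolding funpow_Suc_right o_def by metis
qed

definition seq_splice :: "nat \<Rightarrow> (nat \<Rightarrow> 'a) list \<Rightarrow> (nat \<Rightarrow> 'a) list \<Rightarrow> (nat \<Rightarrow> 'a) list" where
  "seq_splice k Ws Vs = map2 (\<lambda>w v j. if j < k then w j else v (j - k)) Ws Vs"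

lemma length_seq_splice [simp]: "length (seq_splice k Ws Vs) = min (length Ws) (length Vs)"
  by (simp add: seq_splice_def)

lemma nth_seq_splice:
  "i < length Ws \<Longrightarrow> i < length Vs \<Longrightarrow>
     (seq_splice k Ws Vs ! i) j = (if j < k then (Ws ! i) j else (Vs ! i) (j - k))"
  by (simp add: seq_splice_def)

lemma seq_splice_in_strategies:
  "Ws \<in> strategies m N Q \<Longrightarrow> Vs \<in> strategies m N Q \<Longrightarrow> seq_splice k Ws Vs \<in> strategies m N Q"
  by (simp add: strategies_def nth_seq_splice)

lemma funpow_G_F_seq_splice:
  assumes "length Ws = m" "length Vs = m"
  shows "(G_F m N Q F ^^ k) (seq_splice k Ws Vs, X) = (Vs, snd ((G_F m N Q F ^^ k) (Ws, X)))"
proof (rule prod_eqI)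
  show "fst ((G_F m N Q F ^^ k) (seq_splice k Ws Vs, X)) = fst (Vs, snd ((G_F m N Q F ^^ k) (Ws, X)))"
    unfolding fst_funpow_G_F using assms by (intro nth_equalityI) (simp_all add: nth_seq_splice)
  have "snd ((G_F m N Q F ^^ k) (seq_splice k Ws Vs, X)) = snd ((G_F m N Q F ^^ k) (Ws, X))"
    by (rule snd_funpow_G_F_cong) (simp_all add: assms nth_seq_splice)
  then show "snd ((G_F m N Q F ^^ k) (seq_splice k Ws Vs, X)) = snd (Vs, snd ((G_F m N Q F ^^ k) (Ws, X)))"
    by simp
qed

lemma rtrancl_state_edges_imp_orbit:
  assumes "(x, y) \<in> (state_edges m N Q F)\<^sup>*" and "Vs \<in> strategies m N Q"
  shows "\<exists>n. \<exists>W\<in>strategies m N Q. (G_F m N Q F ^^ n) (W, x) = (Vs, y)"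
  using assms(1)
proof (induction rule: converse_rtrancl_induct)
  case base
  show ?case
    using assms(2) by (metis funpow_0)
next
  case (step x z)
  obtain Wx where Wx: "Wx \<in> strategies m N Q" "snd (G_F m N Q F (Wx, x)) = z"
    using step.hyps(1) by (auto simp: state_edges_iff)
  obtain n W where W: "W \<in> strategies m N Q" "(G_F m N Q F ^^ n) (W, z) = (Vs, y)"
    using step.IH by blast
  have "(G_F m N Q F ^^ 1) (seq_splice 1 Wx W, x) = (W, snd ((G_F m N Q F ^^ 1) (Wx, x)))"
    by (rule funpow_G_F_seq_splice) (use Wx(1) W(1) in \<open>simp_all add: strategies_def\<close>)
  then have "(G_F m N Q F ^^ 1) (seq_splice 1 Wx W, x) = (W, z)"
    using Wx(2) by simp
  then have "(G_F m N Q F ^^ (n + 1)) (seq_splice 1 Wx W, x) = (Vs, y)"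
    using W(2) by (simp only: funpow_add o_apply)
  then show ?case
    using Wx(1) W(1) seq_splice_in_strategies by blast
qed

lemma weighted_tail_sum_le:
  fixes f :: "nat \<Rightarrow> real"
  assumes bound: "\<And>j. \<bar>f j\<bar> \<le> c" and vanish: "\<And>j. j < k \<Longrightarrow> f j = 0" and "N \<ge> 1"
  shows "(\<Sum>j. \<bar>f j\<bar> / 2 ^ (N * (j + 1))) \<le> c * (1/2)^k"
proof -
  define g where "g j = \<bar>f j\<bar> / 2 ^ (N * (j + 1))" for j
  have "c \<ge> 0"
    using bound[of 0] by linarith
  have g_le: "g j \<le> c * (1/2)^(j + 1)" for j
  proof -
    have "(2::real)^(j + 1) \<le> 2^(N * (j + 1))"
      using mult_le_mono1[OF \<open>N \<ge> 1\<close>, of "j + 1"] by (intro power_increasing) auto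
    then have "g j \<le> c / 2^(j + 1)"
      unfolding g_def using bound \<open>c \<ge> 0\<close> by (intro frac_le) auto
    then show ?thesis
      by (simp add: power_one_over)
  qed
  have "summable g"
    by (rule summable_comparison_test[where g = "\<lambda>j. c * (1/2)^(j + 1)"])
       (use g_le in \<open>auto simp: g_def intro!: summable_mult\<close>)
  moreover have "(\<lambda>j. g (j + k)) sums (\<Sum>j. g j) \<longleftrightarrow> g sums (\<Sum>j. g j)"
    by (rule sums_zero_iff_shift) (simp add: g_def vanish)
  ultimately have "(\<lambda>j. g (j + k)) sums (\<Sum>j. g j)"
    using summable_sums by blast
  moreover have "(\<lambda>j. c * (1/2)^(k + 1) * (1/2)^j) sums (c * (1/2)^k)"
    using sums_mult[OF geometric_sums[of "1/2::real"], of "c * (1/2)^(k + 1)"] by simp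
  moreover have "g (j + k) \<le> c * (1/2)^(k + 1) * (1/2)^j" for j
    using g_le[of "j + k"] by (simp add: power_add mult_ac)
  ultimately show ?thesis
    unfolding g_def by (rule sums_le[rotated])
qed

lemma dist_E_le_if_prefix_eq:
  assumes "W \<in> strategies m N Q" "W' \<in> strategies m N Q" "N \<ge> 1"
    and "\<forall>i<m. \<forall>j<k. (W ! i) j = (W' ! i) j"
  shows "dist_E m N (W, X) (W', X) \<le> real m * 2^N * (1/2)^k"
proof -
  have tail: "(\<Sum>j. \<bar>(W ! i) j - (W' ! i) j\<bar> / 2 ^ (N * (j + 1))) \<le> 2^N * (1/2)^k"
    if "i < m" for i
  proof (rule weighted_tail_sum_le)
    fix j
    have "(W ! i) j \<in> {0..2^N}" "(W' ! i) j \<in> {0..2^N}"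
      using assms(1,2) \<open>i < m\<close> fxD_subset_atLeastAtMost unfolding strategies_def by blast+
    then show "\<bar>(W ! i) j - (W' ! i) j\<bar> \<le> 2^N"
      by auto
  qed (use assms(3,4) \<open>i < m\<close> in auto)
  have "dist_E m N (W, X) (W', X) = (\<Sum>i<m. \<Sum>j. \<bar>(W ! i) j - (W' ! i) j\<bar> / 2 ^ (N * (j + 1)))"
    by (simp add: dist_E_def)
  also have "\<dots> \<le> (\<Sum>i<m. 2^N * (1/2)^k)"
    using tail by (intro sum_mono) simp
  finally show ?thesis
    by simp
qed

lemma exists_pos_geometric_less:
  fixes c e :: real
  assumes "c \<ge> 0" "e > 0"
  shows "\<exists>k>0. c * (1/2)^k < e"
proof -
  obtain n where n: "(1/2::real)^n < e / (c + 1)"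
    using real_arch_pow_inv[of "e / (c + 1)" "1/2"] assms by auto
  have "c * (1/2)^Suc n \<le> (c + 1) * (1/2)^n"
    using assms(1) by (intro mult_mono) (auto intro: power_decreasing)
  also have "\<dots> < e"
    using n assms(1) by (simp add: field_simps)
  finally show ?thesis
    by blast
qed

lemma cylinder_subset_metric_open:
  assumes "metric_open (phase_space m N Q) (dist_E m N) U" "(W1, X1) \<in> U" "N \<ge> 1"
  obtains k where "k > 0"
    "\<And>W. W \<in> strategies m N Q \<Longrightarrow> \<forall>i<m. \<forall>j<k. (W1 ! i) j = (W ! i) j \<Longrightarrow> (W, X1) \<in> U"
proof -
  have W1: "W1 \<in> strategies m N Q" and X1: "X1 \<in> state_space m N Q"
    using assms(1,2) by (auto simp: metric_open_def phase_space_eq)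
  obtain e where "e > 0" and e: "\<forall>E\<in>phase_space m N Q. dist_E m N (W1, X1) E < e \<longrightarrow> E \<in> U"
    using assms(1,2) unfolding metric_open_def by blast
  obtain k where "k > 0" and k: "real m * 2^N * (1/2)^k < e"
    using exists_pos_geometric_less[of "real m * 2^N" e] \<open>e > 0\<close> by auto
  have "(W, X1) \<in> U" if W: "W \<in> strategies m N Q" and prefix: "\<forall>i<m. \<forall>j<k. (W1 ! i) j = (W ! i) j" for W
  proof -
    have "dist_E m N (W1, X1) (W, X1) < e"
      using dist_E_le_if_prefix_eq[OF W1 W \<open>N \<ge> 1\<close> prefix, of X1] k by linarith
    then show ?thesis
      using e W X1 by (simp add: phase_space_eq)
  qed
  with \<open>k > 0\<close> show ?thesis
    using that by blast
qed

lemma strongly_connected_net_imp_spliced_orbit: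
  assumes "\<forall>i<m. \<forall>x\<in>state_space m N Q. F i x \<in> fxD N Q" and "strongly_connected_net m N Q F"
    and "(W1, X1) \<in> phase_space m N Q" and "(W2, X2) \<in> phase_space m N Q"
  obtains n W where "W \<in> strategies m N Q" "\<forall>i<m. \<forall>j<k. (W1 ! i) j = (W ! i) j"
    "(G_F m N Q F ^^ (n + k)) (W, X1) = (W2, X2)"
proof -
  let ?G = "G_F m N Q F"
  have W1: "W1 \<in> strategies m N Q" and W2: "W2 \<in> strategies m N Q" and X2: "X2 \<in> state_space m N Q"
    using assms(3,4) by (auto simp: phase_space_eq)
  have "(?G ^^ k) (W1, X1) \<in> phase_space m N Q"
    using funpow_G_F_in_phase_space[OF assms(3,1)] .
  then have "(snd ((?G ^^ k) (W1, X1)), X2) \<in> (state_edges m N Q F)\<^sup>*"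
    using assms(2) X2 by (auto simp: strongly_connected_net_def phase_space_eq mem_Times_iff)
  then obtain n W0 where W0: "W0 \<in> strategies m N Q"
      and run: "(?G ^^ n) (W0, snd ((?G ^^ k) (W1, X1))) = (W2, X2)"
    using rtrancl_state_edges_imp_orbit[OF _ W2] by blast
  show ?thesis
  proof (rule that)
    show "seq_splice k W1 W0 \<in> strategies m N Q"
      using W1 W0 by (rule seq_splice_in_strategies)
    show "\<forall>i<m. \<forall>j<k. (W1 ! i) j = (seq_splice k W1 W0 ! i) j"
      using W1 W0 by (simp add: nth_seq_splice strategies_def)
    show "(?G ^^ (n + k)) (seq_splice k W1 W0, X1) = (W2, X2)"
      using W1 W0 run by (simp add: funpow_add funpow_G_F_seq_splice strategies_def)
  qed
qed

theorem theorem2: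
  fixes m P Q N :: nat and F :: "nat \<Rightarrow> real list \<Rightarrow> real"
  assumes "m \<ge> 1" and "N = P + Q" and "N \<ge> 1"
    and "\<forall>i<m. \<forall>x\<in>state_space m N Q. F i x \<in> fxD N Q"
    and "strongly_connected_net m N Q F"
  shows "\<forall>U1 U2. metric_open (phase_space m N Q) (dist_E m N) U1 \<and> U1 \<noteq> {} \<and>
            metric_open (phase_space m N Q) (dist_E m N) U2 \<and> U2 \<noteq> {} \<longrightarrow>
            (\<exists>n0>0. (G_F m N Q F ^^ n0) ` U1 \<inter> U2 \<noteq> {})"
proof (intro allI impI)
  fix U1 U2
  assume H: "metric_open (phase_space m N Q) (dist_E m N) U1 \<and> U1 \<noteq> {} \<and>
            metric_open (phase_space m N Q) (dist_E m N) U2 \<and> U2 \<noteq> {}"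
  obtain W1 X1 W2 X2 where E1: "(W1, X1) \<in> U1" and E2: "(W2, X2) \<in> U2"
    using H by auto
  then have phase: "(W1, X1) \<in> phase_space m N Q" "(W2, X2) \<in> phase_space m N Q"
    using H by (auto simp: metric_open_def)
  obtain k where "k > 0" and cylinder:
    "\<And>W. W \<in> strategies m N Q \<Longrightarrow> \<forall>i<m. \<forall>j<k. (W1 ! i) j = (W ! i) j \<Longrightarrow> (W, X1) \<in> U1"
    using cylinder_subset_metric_open H E1 \<open>N \<ge> 1\<close> by metis
  obtain n W where "W \<in> strategies m N Q" "\<forall>i<m. \<forall>j<k. (W1 ! i) j = (W ! i) j"
    and run: "(G_F m N Q F ^^ (n + k)) (W, X1) = (W2, X2)"
    using strongly_connected_net_imp_spliced_orbit[OF assms(4,5) phase] by blast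
  then have "(W2, X2) \<in> (G_F m N Q F ^^ (n + k)) ` U1 \<inter> U2"
    using cylinder E2 by (metis IntI image_eqI)
  then show "\<exists>n0>0. (G_F m N Q F ^^ n0) ` U1 \<inter> U2 \<noteq> {}"
    using \<open>k > 0\<close> by (metis add_gr_0 empty_iff)
qed

end
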